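(* Let $\mathcal{U}$ be a $Sob$ effect algebra on a complex Hilbert space $H$. Then $\mathcal{U}$ is convex if and only if $A\in\mathcal{U}$ and $0\le\lambda\le1$ imply $\lambda A\in\mathcal{U}$.
   Context: $\mathcal{E}(H)$ is the set of effects ($0\le a\le I$). A sub-observable with outcome space $(\Omega,\mathcal{F})$ is a map $\mathcal{F}\to\mathcal{E}(H)$ countably additive in the strong operator topology; it is an observable if its value on $\Omega$ is $I$; $Sob(H)$ is the set of sub-observables, with pointwise linear operations. A subset $\mathcal{U}\subseteq Sob(H)$ all of whose elements have the same outcome space is a $Sob$ effect algebra if: (S1) there is an observable $Z\in\mathcal{U}$; (S2) $A\in\mathcal{U}$ implies $Z-A\in\mathcal{U}$; (S3) $A,B\in\mathcal{U}$ and $A+B\in Sob(H)$ imply $A+B\in\mathcal{U}$. A subset $\mathcal{V}\subseteq Sob(H)$ is convex if whenever $A_i\in\mathcal{V}$, $0\le\lambda_i\le1$ ($i=1,\dots,n$) and $\sum_{i=1}^n\lambda_i=1$, we have $\sum_{i=1}^n\lambda_iA_i\in\mathcal{V}$. *)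

theory Defs
  imports "HOL-Analysis.Analysis"
begin

class complex_vector = real_vector +
  fixes scaleC :: "complex \<Rightarrow> 'a \<Rightarrow> 'a" (infixr "*\<^sub>C" 75)
  assumes scaleC_add_right: "a *\<^sub>C (x + y) = a *\<^sub>C x + a *\<^sub>C y"
    and scaleC_add_left: "(a + b) *\<^sub>C x = a *\<^sub>C x + b *\<^sub>C x"
    and scaleC_scaleC: "a *\<^sub>C (b *\<^sub>C x) = (a * b) *\<^sub>C x"
    and scaleC_one: "1 *\<^sub>C x = x"
    and scaleR_scaleC: "r *\<^sub>R x = complex_of_real r *\<^sub>C x"

class complex_inner = complex_vector + real_normed_vector +
  fixes cinner :: "'a \<Rightarrow> 'a \<Rightarrow> complex"
  assumes cinner_commute: "cinner x y = cnj (cinner y x)"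
    and cinner_add_left: "cinner (x + y) z = cinner x z + cinner y z"
    and cinner_scaleC_left: "cinner (a *\<^sub>C x) y = cnj a * cinner x y"
    and cinner_self_norm: "cinner x x = complex_of_real ((norm x)\<^sup>2)"

class chilbert_space = complex_inner + complete_space

definition clinear :: "('a::complex_vector \<Rightarrow> 'b::complex_vector) \<Rightarrow> bool" where
  "clinear f \<longleftrightarrow> (\<forall>x y. f (x + y) = f x + f y) \<and> (\<forall>c x. f (c *\<^sub>C x) = c *\<^sub>C f x)"

definition bounded_clinear :: "('a::complex_inner \<Rightarrow> 'b::complex_inner) \<Rightarrow> bool" where
  "bounded_clinear f \<longleftrightarrow> clinear f \<and> (\<exists>K. \<forall>x. norm (f x) \<le> norm x * K)"

text \<open>An effect: a bounded operator a with 0 \<le> a \<le> I, i.e. the quadratic form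
  is real and lies between 0 and the norm squared (in a complex Hilbert space this
  forces self-adjointness).\<close>
definition effect :: "('h::chilbert_space \<Rightarrow> 'h) \<Rightarrow> bool" where
  "effect a \<longleftrightarrow> bounded_clinear a \<and>
     (\<forall>x. \<exists>r. cinner x (a x) = complex_of_real r \<and> 0 \<le> r \<and> r \<le> (norm x)\<^sup>2)"

text \<open>Maps are total on all subsets of the outcome set; outside the sigma-algebra
  they are fixed to 0 so that equality is determined by the values on F.\<close>
definition sub_observable :: "'w measure \<Rightarrow> ('w set \<Rightarrow> 'h::chilbert_space \<Rightarrow> 'h) \<Rightarrow> bool" where
  "sub_observable M A \<longleftrightarrow>
     (\<forall>E\<in>sets M. effect (A E)) \<and>
     (\<forall>E. E \<notin> sets M \<longrightarrow> A E = (\<lambda>_. 0)) \<and>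
     (\<forall>F. range F \<subseteq> sets M \<longrightarrow> disjoint_family F \<longrightarrow>
          (\<forall>x. (\<lambda>n. A (F n) x) sums A (\<Union>n. F n) x))"

definition Sob :: "'w measure \<Rightarrow> ('w set \<Rightarrow> 'h::chilbert_space \<Rightarrow> 'h) set" where
  "Sob M = {A. sub_observable M A}"

definition observable :: "'w measure \<Rightarrow> ('w set \<Rightarrow> 'h::chilbert_space \<Rightarrow> 'h) \<Rightarrow> bool" where
  "observable M A \<longleftrightarrow> sub_observable M A \<and> A (space M) = id"

definition Sob_effect_algebra :: "'w measure \<Rightarrow> ('w set \<Rightarrow> 'h::chilbert_space \<Rightarrow> 'h) set \<Rightarrow> bool" where
  "Sob_effect_algebra M U \<longleftrightarrow> U \<subseteq> Sob M \<and>
     (\<exists>Z\<in>U. observable M Z \<and> (\<forall>A\<in>U. (\<lambda>E x. Z E x - A E x) \<in> U)) \<and>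
     (\<forall>A\<in>U. \<forall>B\<in>U. (\<lambda>E x. A E x + B E x) \<in> Sob M \<longrightarrow> (\<lambda>E x. A E x + B E x) \<in> U)"

definition convex_sob :: "('w set \<Rightarrow> 'h::chilbert_space \<Rightarrow> 'h) set \<Rightarrow> bool" where
  "convex_sob V \<longleftrightarrow> (\<forall>(n::nat) A lam.
     (\<forall>i<n. A i \<in> V \<and> 0 \<le> lam i \<and> lam i \<le> (1::real)) \<and> (\<Sum>i<n. lam i) = 1 \<longrightarrow>
     (\<lambda>E x. \<Sum>i<n. lam i *\<^sub>R A i E x) \<in> V)"

end

theory Submission
  imports Defs
begin

text \<open>Scaling is the special case of a convex combination of A with the zero
  sub-observable Z - Z. Conversely, the partial sums of a convex combination are sums of
  sub-observables whose effects lie between 0 and the partial sum of the weights times I,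
  hence below I; so every partial sum is a sub-observable, and closure of the effect algebra
  under such sums adds the scaled summands one at a time.\<close>

lemma cinner_add_right: "cinner x (y + z) = cinner x y + cinner x (z::'a::complex_inner)"
  by (metis cinner_commute cinner_add_left complex_cnj_add)

lemma cinner_scaleR_right: "cinner x (r *\<^sub>R y) = complex_of_real r * cinner x (y::'a::complex_inner)"
  by (metis cinner_commute cinner_scaleC_left complex_cnj_complex_of_real complex_cnj_mult
      complex_cnj_cnj scaleR_scaleC)

lemma cinner_zero_right: "cinner x (0::'a::complex_inner) = 0"
  using cinner_add_right[of x 0 0] by simp

lemma scaleC_zero_right: "c *\<^sub>C (0::'a::complex_vector) = 0"
  using scaleC_add_right[of c "0::'a" 0] by simp

lemma bounded_clinear_zero: "bounded_clinear (\<lambda>x::'a::complex_inner. 0::'b::complex_inner)"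
  unfolding bounded_clinear_def clinear_def by (auto simp: scaleC_zero_right intro: exI[of _ 0])

lemma bounded_clinear_add:
  assumes "bounded_clinear a" "bounded_clinear b"
  shows "bounded_clinear (\<lambda>x. a x + b x)"
proof -
  obtain K L where "\<forall>x. norm (a x) \<le> norm x * K" "\<forall>x. norm (b x) \<le> norm x * L"
    using assms unfolding bounded_clinear_def by blast
  then have "norm (a x + b x) \<le> norm x * (K + L)" for x
    by (metis distrib_left norm_triangle_le add_mono)
  with assms show ?thesis
    unfolding bounded_clinear_def clinear_def
    by (auto simp: algebra_simps scaleC_add_right intro!: exI[of _ "K + L"])
qed

lemma bounded_clinear_scaleR:
  assumes "bounded_clinear a"
  shows "bounded_clinear (\<lambda>x. l *\<^sub>R a x)"
proof -
  obtain K where "\<forall>x. norm (a x) \<le> norm x * K"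
    using assms unfolding bounded_clinear_def by blast
  then have "norm (l *\<^sub>R a x) \<le> norm x * (\<bar>l\<bar> * K)" for x
    by (simp add: mult_left_mono mult.left_commute)
  moreover have "l *\<^sub>R (c *\<^sub>C y) = c *\<^sub>C (l *\<^sub>R y)" for c and y :: 'b
    by (simp add: scaleR_scaleC scaleC_scaleC mult.commute)
  ultimately show ?thesis
    using assms unfolding bounded_clinear_def clinear_def by (auto simp: scaleR_add_right)
qed

definition effect_upto :: "real \<Rightarrow> ('h::chilbert_space \<Rightarrow> 'h) \<Rightarrow> bool" where
  "effect_upto w a \<longleftrightarrow> bounded_clinear a \<and>
     (\<forall>x. \<exists>r. cinner x (a x) = complex_of_real r \<and> 0 \<le> r \<and> r \<le> w * (norm x)\<^sup>2)"

lemma effect_eq_effect_upto_1: "effect a \<longleftrightarrow> effect_upto 1 a"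
  unfolding effect_def effect_upto_def by simp

lemma effect_upto_zero: "effect_upto 0 (\<lambda>x. 0)"
  unfolding effect_upto_def by (simp add: bounded_clinear_zero cinner_zero_right)

lemma effect_upto_mono: "effect_upto w a \<Longrightarrow> w \<le> v \<Longrightarrow> effect_upto v a"
  unfolding effect_upto_def by (meson mult_right_mono order.trans zero_le_power2)

lemma effect_upto_add:
  assumes "effect_upto w a" "effect_upto v b"
  shows "effect_upto (w + v) (\<lambda>x. a x + b x)"
  unfolding effect_upto_def
proof (intro conjI allI)
  fix x
  obtain r s where "cinner x (a x) = complex_of_real r" "0 \<le> r" "r \<le> w * (norm x)\<^sup>2"
    and "cinner x (b x) = complex_of_real s" "0 \<le> s" "s \<le> v * (norm x)\<^sup>2"
    using assms unfolding effect_upto_def by blast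
  then show "\<exists>t. cinner x (a x + b x) = complex_of_real t \<and> 0 \<le> t \<and> t \<le> (w + v) * (norm x)\<^sup>2"
    by (intro exI[of _ "r + s"]) (simp add: cinner_add_right distrib_right)
qed (use assms bounded_clinear_add in \<open>auto simp: effect_upto_def\<close>)

lemma effect_upto_scaleR:
  assumes "effect_upto w a" "0 \<le> l"
  shows "effect_upto (l * w) (\<lambda>x. l *\<^sub>R a x)"
  unfolding effect_upto_def
proof (intro conjI allI)
  fix x
  obtain r where "cinner x (a x) = complex_of_real r" "0 \<le> r" "r \<le> w * (norm x)\<^sup>2"
    using assms unfolding effect_upto_def by blast
  then show "\<exists>t. cinner x (l *\<^sub>R a x) = complex_of_real t \<and> 0 \<le> t \<and> t \<le> (l * w) * (norm x)\<^sup>2"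
    using \<open>0 \<le> l\<close>
    by (intro exI[of _ "l * r"]) (simp add: cinner_scaleR_right mult_left_mono mult.assoc)
qed (use assms bounded_clinear_scaleR in \<open>auto simp: effect_upto_def\<close>)

definition sub_observable_upto :: "'w measure \<Rightarrow> real \<Rightarrow> ('w set \<Rightarrow> 'h::chilbert_space \<Rightarrow> 'h) \<Rightarrow> bool" where
  "sub_observable_upto M w A \<longleftrightarrow>
     (\<forall>E\<in>sets M. effect_upto w (A E)) \<and>
     (\<forall>E. E \<notin> sets M \<longrightarrow> A E = (\<lambda>_. 0)) \<and>
     (\<forall>F. range F \<subseteq> sets M \<longrightarrow> disjoint_family F \<longrightarrow>
          (\<forall>x. (\<lambda>n. A (F n) x) sums A (\<Union>n. F n) x))"

lemma Sob_iff_sub_observable_upto_1: "A \<in> Sob M \<longleftrightarrow> sub_observable_upto M 1 A"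
  unfolding Sob_def sub_observable_def sub_observable_upto_def effect_eq_effect_upto_1 by simp

lemma sub_observable_upto_mono:
  "sub_observable_upto M w A \<Longrightarrow> w \<le> v \<Longrightarrow> sub_observable_upto M v A"
  unfolding sub_observable_upto_def using effect_upto_mono by blast

lemma sub_observable_upto_zero: "sub_observable_upto M 0 (\<lambda>E x. 0)"
  unfolding sub_observable_upto_def by (simp add: effect_upto_zero)

lemma sub_observable_upto_add:
  assumes "sub_observable_upto M w A" "sub_observable_upto M v B"
  shows "sub_observable_upto M (w + v) (\<lambda>E x. A E x + B E x)"
  using assms unfolding sub_observable_upto_def by (auto intro: effect_upto_add sums_add)

lemma sub_observable_upto_scaleR:
  assumes "sub_observable_upto M w A" "0 \<le> l"
  shows "sub_observable_upto M (l * w) (\<lambda>E x. l *\<^sub>R A E x)"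
  using assms unfolding sub_observable_upto_def by (auto intro: effect_upto_scaleR sums_scaleR_right)

lemma sub_observable_upto_sum:
  fixes n :: nat
  assumes "\<forall>i<n. A i \<in> Sob M \<and> 0 \<le> lam i"
  shows "sub_observable_upto M (\<Sum>i<n. lam i) (\<lambda>E x. \<Sum>i<n. lam i *\<^sub>R A i E x)"
  using assms
proof (induction n)
  case 0
  show ?case using sub_observable_upto_zero by simp
next
  case (Suc n)
  have "sub_observable_upto M (lam n * 1) (\<lambda>E x. lam n *\<^sub>R A n E x)"
    using Suc.prems by (simp add: sub_observable_upto_scaleR Sob_iff_sub_observable_upto_1 del: mult_1_right)
  with Suc show ?case
    by (simp add: sub_observable_upto_add)
qed

lemma Sob_effect_algebra_zero:
  assumes "Sob_effect_algebra M U"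
  shows "(\<lambda>E x. 0) \<in> U"
proof -
  obtain Z where "Z \<in> U" "(\<lambda>E x. Z E x - Z E x) \<in> U"
    using assms unfolding Sob_effect_algebra_def by blast
  then show ?thesis by simp
qed

lemma convex_sob_scaleR:
  assumes "convex_sob U" "(\<lambda>E x. 0) \<in> U" "A \<in> U" "0 \<le> l" "l \<le> 1"
  shows "(\<lambda>E x. l *\<^sub>R A E x) \<in> U"
proof -
  have "(\<lambda>E x. \<Sum>i<2. ([l, 1 - l] ! i) *\<^sub>R ([A, \<lambda>E x. 0] ! i) E x) \<in> U"
    using assms unfolding convex_sob_def
    by (elim allE[of _ 2] allE[of _ "\<lambda>i. [A, \<lambda>E x. 0] ! i"] allE[of _ "\<lambda>i. [l, 1 - l] ! i"] mp)
       (auto simp: numeral_2_eq_2 less_Suc_eq)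
  then show ?thesis by (simp add: numeral_2_eq_2)
qed

lemma Sob_effect_algebra_weighted_sum:
  fixes n :: nat
  assumes U: "Sob_effect_algebra M U"
    and scale: "\<forall>A\<in>U. \<forall>l::real. 0 \<le> l \<and> l \<le> 1 \<longrightarrow> (\<lambda>E x. l *\<^sub>R A E x) \<in> U"
    and A: "\<forall>i<n. A i \<in> U \<and> 0 \<le> lam i" and total: "(\<Sum>i<n. lam i) \<le> 1"
  shows "(\<lambda>E x. \<Sum>i<n. lam i *\<^sub>R A i E x) \<in> U"
  using A total
proof (induction n)
  case 0
  show ?case using Sob_effect_algebra_zero[OF U] by simp
next
  case (Suc n)
  have "lam n \<le> 1" and "(\<Sum>i<n. lam i) \<le> 1"
    using Suc.prems sum_nonneg[of "{..<n}" lam] by auto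
  then have summands: "(\<lambda>E x. \<Sum>i<n. lam i *\<^sub>R A i E x) \<in> U" "(\<lambda>E x. lam n *\<^sub>R A n E x) \<in> U"
    using Suc scale by auto
  have "U \<subseteq> Sob M"
    using U unfolding Sob_effect_algebra_def by blast
  then have "sub_observable_upto M (\<Sum>i<Suc n. lam i) (\<lambda>E x. \<Sum>i<Suc n. lam i *\<^sub>R A i E x)"
    using Suc.prems by (intro sub_observable_upto_sum) auto
  then have "(\<lambda>E x. (\<Sum>i<n. lam i *\<^sub>R A i E x) + lam n *\<^sub>R A n E x) \<in> Sob M"
    using Suc.prems sub_observable_upto_mono by (simp add: Sob_iff_sub_observable_upto_1)
  with summands U show ?case
    unfolding Sob_effect_algebra_def by simp
qed

theorem theorem3p5:
  fixes M :: "'w measure" and U :: "('w set \<Rightarrow> 'h::chilbert_space \<Rightarrow> 'h) set"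
  assumes "Sob_effect_algebra M U"
  shows "convex_sob U \<longleftrightarrow>
    (\<forall>A\<in>U. \<forall>l::real. 0 \<le> l \<and> l \<le> 1 \<longrightarrow> (\<lambda>E x. l *\<^sub>R A E x) \<in> U)"
proof
  assume "convex_sob U"
  then show "\<forall>A\<in>U. \<forall>l::real. 0 \<le> l \<and> l \<le> 1 \<longrightarrow> (\<lambda>E x. l *\<^sub>R A E x) \<in> U"
    using convex_sob_scaleR Sob_effect_algebra_zero[OF assms] by blast
next
  assume "\<forall>A\<in>U. \<forall>l::real. 0 \<le> l \<and> l \<le> 1 \<longrightarrow> (\<lambda>E x. l *\<^sub>R A E x) \<in> U"
  then show "convex_sob U"
    unfolding convex_sob_def by (auto intro!: Sob_effect_algebra_weighted_sum[OF assms])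
qed

end
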